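(* Let $\mathcal{L}$ be a regular linear space of real symmetric $n\times n$ matrices whose ML degree is $0$. Then $\mathcal{L}$ has empty intersection with the interior of the cone of positive semidefinite matrices (i.e. $\mathcal{L}$ contains no positive definite matrix).
   Context: For a linear subspace $\mathcal{L}$ of symmetric matrices (its ML degree being that of its complex span in $\mathbb{S}^n$, the space of complex symmetric $n\times n$ matrices): $\mathcal{L}$ is regular if it contains a full-rank matrix; $\mathcal{L}^\perp=\{\Sigma\in\mathbb{S}^n:\mathrm{tr}(K\Sigma)=0\ \forall K\in\mathcal{L}\}$; the reciprocal variety $\mathcal{L}^{-1}$ is the Zariski closure of the set of inverses of invertible matrices in $\mathcal{L}$; the ML degree is the number of matrices in $\mathcal{L}^{-1}\cap(\mathcal{L}^\perp+S)$ for generic $S\in\mathbb{S}^n$. *)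

theory Defs
  imports "HOL-Analysis.Analysis"
begin

definition cmat :: "real^'n^'n \<Rightarrow> complex^'n^'n" where
  "cmat K = (\<chi> i j. complex_of_real (K $ i $ j))"

definition cspan :: "(real^'n^'n) set \<Rightarrow> (complex^'n^'n) set" where
  "cspan L = {A. \<exists>S c. finite S \<and> S \<subseteq> L \<and>
      A = (\<Sum>K\<in>S. (\<chi> i j. c K * (cmat K) $ i $ j))}"

definition symC :: "(complex^'n^'n) set" where
  "symC = {A. transpose A = A}"

definition perpC :: "(complex^'n^'n) set \<Rightarrow> (complex^'n^'n) set" where
  "perpC LC = {Sig \<in> symC. \<forall>K\<in>LC. trace (K ** Sig) = 0}"

inductive poly_fun :: "(complex^'n^'n \<Rightarrow> complex) \<Rightarrow> bool" where
  pf_const: "poly_fun (\<lambda>A. c)"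
| pf_coord: "poly_fun (\<lambda>A. A $ i $ j)"
| pf_add: "poly_fun p \<Longrightarrow> poly_fun q \<Longrightarrow> poly_fun (\<lambda>A. p A + q A)"
| pf_mult: "poly_fun p \<Longrightarrow> poly_fun q \<Longrightarrow> poly_fun (\<lambda>A. p A * q A)"

definition zariski_closed :: "(complex^'n^'n) set \<Rightarrow> bool" where
  "zariski_closed Z \<longleftrightarrow> (\<exists>P. (\<forall>p\<in>P. poly_fun p) \<and> Z = {A. \<forall>p\<in>P. p A = 0})"

definition zariski_closure :: "(complex^'n^'n) set \<Rightarrow> (complex^'n^'n) set" where
  "zariski_closure X = \<Inter> {Z. zariski_closed Z \<and> X \<subseteq> Z}"

definition reciprocal :: "(complex^'n^'n) set \<Rightarrow> (complex^'n^'n) set" where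
  "reciprocal LC = zariski_closure {matrix_inv A | A. A \<in> LC \<and> invertible A}"

text \<open>L (a real space of symmetric matrices) has ML degree d: for generic S in S^n
  (i.e. outside the zero set of a polynomial not vanishing identically on S^n),
  the set L^{-1} \<inter> (L^\<perp> + S) of its complex span is finite of cardinality d.\<close>
definition has_ml_degree :: "(real^'n^'n) set \<Rightarrow> nat \<Rightarrow> bool" where
  "has_ml_degree L d \<longleftrightarrow>
     (\<exists>p. poly_fun p \<and> (\<exists>S\<in>symC. p S \<noteq> 0) \<and>
        (\<forall>S\<in>symC. p S \<noteq> 0 \<longrightarrow>
           (let X = reciprocal (cspan L) \<inter> {Sig + S | Sig. Sig \<in> perpC (cspan L)}
            in finite X \<and> card X = d)))"

definition regular :: "(real^'n^'n) set \<Rightarrow> bool" where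
  "regular L \<longleftrightarrow> (\<exists>K\<in>L. invertible K)"

definition pos_def :: "real^'n^'n \<Rightarrow> bool" where
  "pos_def K \<longleftrightarrow> transpose K = K \<and> (\<forall>x. x \<noteq> 0 \<longrightarrow> x \<bullet> (K *v x) > 0)"

end

theory Submission
  imports Defs "HOL-Computational_Algebra.Polynomial"
begin

text \<open>Suppose L contains a positive definite K0 and let pr be the orthogonal projection onto L.
  The map K \<mapsto> pr (K^-1) on L has differential H \<mapsto> -pr (P H P) at K0, where P = K0^-1;
  it is injective because \<langle>H, P H P\<rangle> = tr (P H P H) > 0 for symmetric H \<noteq> 0. By the open
  mapping theorem, every real symmetric S near P has pr S = pr (K^-1) for some invertible K \<in> L,
  i.e. K^-1 lies in the reciprocal variety and in L^\<perp> + S. A polynomial vanishing on an open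
  set of real symmetric matrices vanishes on all complex symmetric ones, so such S can be taken
  generic, and ML degree 0 says that this intersection is then empty.\<close>

lemma poly_fun_on_line:
  fixes X Y :: "complex^'n^'n"
  assumes "poly_fun p"
  shows "\<exists>q. \<forall>t. p (\<chi> i j. X$i$j + t * Y$i$j) = poly q t"
  using assms
proof (induction rule: poly_fun.induct)
  case (pf_const c)
  show ?case by (intro exI[of _ "[:c:]"]) simp
next
  case (pf_coord i j)
  show ?case by (intro exI[of _ "[:X$i$j, Y$i$j:]"]) (simp add: algebra_simps)
next
  case (pf_add p q)
  then obtain a b where "\<forall>t. p (\<chi> i j. X$i$j + t * Y$i$j) = poly a t"
    "\<forall>t. q (\<chi> i j. X$i$j + t * Y$i$j) = poly b t" by blast
  then show ?case by (intro exI[of _ "a + b"]) simp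
next
  case (pf_mult p q)
  then obtain a b where "\<forall>t. p (\<chi> i j. X$i$j + t * Y$i$j) = poly a t"
    "\<forall>t. q (\<chi> i j. X$i$j + t * Y$i$j) = poly b t" by blast
  then show ?case by (intro exI[of _ "a * b"]) simp
qed

lemma poly_eq_0_if_infinite_real_roots:
  fixes q :: "complex poly"
  assumes "infinite T" and "\<And>t. t \<in> T \<Longrightarrow> poly q (of_real t) = 0"
  shows "q = 0"
proof (rule ccontr)
  assume "q \<noteq> 0"
  then have "finite {x. poly q x = 0}" by (rule poly_roots_finite)
  moreover have "of_real ` T \<subseteq> {x. poly q x = 0}" using assms(2) by auto
  ultimately have "finite (of_real ` T :: complex set)" by (rule finite_subset[rotated])
  moreover have "inj_on (of_real :: real \<Rightarrow> complex) T" by (simp add: inj_on_def)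
  ultimately show False using assms(1) finite_imageD by blast
qed

lemma cmat_add_scaleR:
  "cmat (P + t *\<^sub>R D) = (\<chi> i j. cmat P $i$j + complex_of_real t * cmat D $i$j)"
  by (simp add: cmat_def vec_eq_iff)

lemma cmat_mult: "cmat (A ** B) = cmat A ** cmat B"
  by (simp add: cmat_def matrix_matrix_mult_def vec_eq_iff)

lemma cmat_mat_1: "cmat (mat 1) = mat 1"
  by (simp add: cmat_def mat_def vec_eq_iff)

lemma cmat_transpose: "cmat (transpose A) = transpose (cmat A)"
  by (simp add: cmat_def transpose_def vec_eq_iff)

lemma cmat_in_symC_iff: "cmat S \<in> symC \<longleftrightarrow> transpose S = S"
  by (auto simp: symC_def cmat_transpose[symmetric] cmat_def vec_eq_iff transpose_def)

lemma poly_fun_vanishes_on_real_sym_if_vanishes_on_open: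
  fixes P R :: "real^'n^'n"
  assumes pf: "poly_fun p" and U: "open U" "P \<in> U" and Ps: "transpose P = P"
    and van: "\<And>S. S \<in> U \<Longrightarrow> transpose S = S \<Longrightarrow> p (cmat S) = 0"
    and Rs: "transpose R = R"
  shows "p (cmat R) = 0"
proof -
  define D where "D = R - P"
  have Ds: "transpose D = D" using Ps Rs by (simp add: D_def transpose_def vec_eq_iff)
  obtain e where e: "e > 0" "ball P e \<subseteq> U" using U openE by blast
  obtain q where q: "\<forall>t. p (\<chi> i j. cmat P$i$j + t * cmat D$i$j) = poly q t"
    using poly_fun_on_line[OF pf] by blast
  define d where "d = e / (norm D + 1)"
  have "norm D + 1 > 0" using norm_ge_zero[of D] by linarith
  then have d: "d > 0" using e by (simp add: d_def)
  have "q = 0"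
  proof (rule poly_eq_0_if_infinite_real_roots[of "{0<..<d}"])
    fix t assume t: "t \<in> {0<..<d}"
    have "norm (t *\<^sub>R D) = t * norm D" using t by simp
    also have "\<dots> \<le> d * norm D" using t by (intro mult_right_mono) auto
    also have "\<dots> = e * norm D / (norm D + 1)" by (simp add: d_def)
    also have "\<dots> < e" using e \<open>norm D + 1 > 0\<close> by (simp add: divide_less_eq algebra_simps)
    finally have "P + t *\<^sub>R D \<in> U" using e by (auto simp: dist_norm)
    moreover have "transpose (P + t *\<^sub>R D) = P + t *\<^sub>R D"
      using Ps Ds by (simp add: transpose_def vec_eq_iff)
    ultimately have "p (cmat (P + t *\<^sub>R D)) = 0" using van by blast
    then show "poly q (of_real t) = 0" using q by (simp add: cmat_add_scaleR)
  qed (use d in auto)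
  then have "p (\<chi> i j. cmat P$i$j + 1 * cmat D$i$j) = 0" using q by (metis poly_0)
  then show ?thesis using cmat_add_scaleR[of P 1 D] by (simp add: D_def)
qed

text \<open>A complex symmetric matrix is B + i C with B, C real symmetric, so it lies on a complex
  line all of whose real points are real symmetric.\<close>
lemma poly_fun_vanishes_on_symC_if_vanishes_on_real_sym:
  fixes A :: "complex^'n^'n"
  assumes pf: "poly_fun p" and van: "\<And>R. transpose R = R \<Longrightarrow> p (cmat R) = 0"
    and A: "A \<in> symC"
  shows "p A = 0"
proof -
  have As: "transpose A = A" using A by (simp add: symC_def)
  define B :: "real^'n^'n" where "B = (\<chi> i j. Re (A$i$j))"
  define C :: "real^'n^'n" where "C = (\<chi> i j. Im (A$i$j))"
  obtain q where q: "\<forall>t. p (\<chi> i j. cmat B$i$j + t * cmat C$i$j) = poly q t"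
    using poly_fun_on_line[OF pf] by blast
  have "q = 0"
  proof (rule poly_eq_0_if_infinite_real_roots[of UNIV])
    fix t :: real
    have "transpose (B + t *\<^sub>R C) = B + t *\<^sub>R C"
      using As unfolding B_def C_def by (simp add: transpose_def vec_eq_iff)
    then have "p (cmat (B + t *\<^sub>R C)) = 0" by (rule van)
    then show "poly q (of_real t) = 0" using q by (simp add: cmat_add_scaleR)
  qed (rule infinite_UNIV_char_0)
  then have "p (\<chi> i j. cmat B$i$j + \<i> * cmat C$i$j) = 0" using q by simp
  moreover have "(\<chi> i j. cmat B$i$j + \<i> * cmat C$i$j) = A"
    by (simp add: vec_eq_iff cmat_def B_def C_def complex_eq_iff)
  ultimately show "p A = 0" by simp
qed

lemma ml_degree_0_fibre_empty_near:
  fixes L :: "(real^'n^'n) set" and P :: "real^'n^'n"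
  assumes "has_ml_degree L 0" and "open U" "P \<in> U" "transpose P = P"
  obtains S where "S \<in> U" "transpose S = S"
    "reciprocal (cspan L) \<inter> {Sig + cmat S | Sig. Sig \<in> perpC (cspan L)} = {}"
proof -
  obtain p where pf: "poly_fun p" and nz: "\<exists>A\<in>symC. p A \<noteq> 0"
    and gen: "\<forall>S\<in>symC. p S \<noteq> 0 \<longrightarrow>
           (let X = reciprocal (cspan L) \<inter> {Sig + S | Sig. Sig \<in> perpC (cspan L)}
            in finite X \<and> card X = 0)"
    using assms(1) unfolding has_ml_degree_def by blast
  obtain S where "S \<in> U" "transpose S = S" "p (cmat S) \<noteq> 0"
    using poly_fun_vanishes_on_symC_if_vanishes_on_real_sym[OF pf
        poly_fun_vanishes_on_real_sym_if_vanishes_on_open[OF pf assms(2-4)]] nz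
    by blast
  with gen that show thesis by (auto simp: cmat_in_symC_iff Let_def)
qed

lemma matrix_inv_right_left:
  fixes K :: "'a::field^'n^'n"
  assumes "invertible K"
  shows matrix_inv_right: "K ** matrix_inv K = mat 1"
    and matrix_inv_left: "matrix_inv K ** K = mat 1"
proof -
  have "\<exists>A'. K ** A' = mat 1 \<and> A' ** K = mat 1" using assms by (simp add: invertible_def)
  then have "K ** matrix_inv K = mat 1 \<and> matrix_inv K ** K = mat 1"
    unfolding matrix_inv_def by (rule someI_ex)
  then show "K ** matrix_inv K = mat 1" "matrix_inv K ** K = mat 1" by auto
qed

lemma right_inverse_imp_invertible_matrix_inv:
  fixes A B :: "'a::field^'n^'n"
  assumes "A ** B = mat 1"
  shows "invertible A" and "matrix_inv A = B"
proof -
  show inv: "invertible A"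
    using assms matrix_left_right_inverse invertible_def by blast
  have "matrix_inv A = matrix_inv A ** (A ** B)" using assms by simp
  also have "\<dots> = (matrix_inv A ** A) ** B" by (simp add: matrix_mul_assoc)
  finally have "matrix_inv A = (matrix_inv A ** A) ** B" .
  then show "matrix_inv A = B" using matrix_inv_left[OF inv] by simp
qed

lemma matrix_inv_symmetric:
  fixes K :: "'a::field^'n^'n"
  assumes "invertible K" "transpose K = K"
  shows "transpose (matrix_inv K) = matrix_inv K"
proof -
  have "transpose (matrix_inv K) ** K = transpose (K ** matrix_inv K)"
    using assms(2) by (simp add: matrix_transpose_mul)
  also have "\<dots> = mat 1" using matrix_inv_right[OF assms(1)] by (simp add: transpose_mat)
  finally have "K ** transpose (matrix_inv K) = mat 1" using matrix_left_right_inverse by blast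
  then show ?thesis using right_inverse_imp_invertible_matrix_inv by metis
qed

lemma cmat_in_cspan: "K \<in> L \<Longrightarrow> cmat K \<in> cspan L"
  unfolding cspan_def
  by (rule CollectI, rule exI[of _ "{K}"], rule exI[of _ "\<lambda>_. 1"]) (simp add: vec_eq_iff)

lemma trace_sym_eq_inner:
  fixes K R :: "real^'n^'n"
  assumes "transpose K = K"
  shows "(\<Sum>i\<in>UNIV. \<Sum>j\<in>UNIV. K$i$j * R$j$i) = K \<bullet> R"
proof -
  have "K$j$i = K$i$j" for i j
    using arg_cong[where f="\<lambda>M. M $ j $ i", OF assms] by (simp add: transpose_def)
  then have "(\<Sum>i\<in>UNIV. \<Sum>j\<in>UNIV. K$i$j * R$j$i) = (\<Sum>i\<in>UNIV. \<Sum>j\<in>UNIV. K$j$i * R$j$i)"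
    by simp
  also have "\<dots> = (\<Sum>j\<in>UNIV. \<Sum>i\<in>UNIV. K$j$i * R$j$i)" by (rule sum.swap)
  also have "\<dots> = K \<bullet> R" by (simp add: inner_vec_def)
  finally show ?thesis .
qed

lemma trace_cspan_mult_cmat_eq_0:
  fixes L :: "(real^'n^'n) set"
  assumes sym: "\<forall>K\<in>L. transpose K = K" and A: "A \<in> cspan L"
    and orth: "\<forall>y\<in>L. y \<bullet> R = 0"
  shows "trace (A ** cmat R) = 0"
proof -
  obtain F c where F: "finite F" "F \<subseteq> L"
    and Aeq: "A = (\<Sum>K\<in>F. (\<chi> i j. c K * (cmat K) $ i $ j))"
    using A unfolding cspan_def by blast
  have Aij: "A$i$j = (\<Sum>K\<in>F. c K * complex_of_real (K$i$j))" for i j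
    by (simp add: Aeq sum_component cmat_def)
  have "trace (A ** cmat R) = (\<Sum>i\<in>UNIV. \<Sum>j\<in>UNIV. A$i$j * complex_of_real (R$j$i))"
    by (simp add: trace_def matrix_matrix_mult_def cmat_def)
  also have "\<dots> = (\<Sum>K\<in>F. c K * complex_of_real (\<Sum>i\<in>UNIV. \<Sum>j\<in>UNIV. K$i$j * R$j$i))"
    by (simp add: Aij sum_distrib_left sum_distrib_right mult.assoc sum.swap[of _ UNIV F])
  also have "\<dots> = 0"
  proof (rule sum.neutral, rule ballI)
    fix K assume "K \<in> F"
    then have "(\<Sum>i\<in>UNIV. \<Sum>j\<in>UNIV. K$i$j * R$j$i) = 0"
      using F sym orth trace_sym_eq_inner[of K R] by auto
    then show "c K * complex_of_real (\<Sum>i\<in>UNIV. \<Sum>j\<in>UNIV. K$i$j * R$j$i) = 0" by simp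
  qed
  finally show ?thesis .
qed

lemma cmat_matrix_inv_in_reciprocal_inter_perp_translate:
  fixes L :: "(real^'n^'n) set"
  assumes sym: "\<forall>K\<in>L. transpose K = K" and KL: "K \<in> L" and Kinv: "invertible K"
    and Ss: "transpose S = S" and orth: "\<forall>y\<in>L. y \<bullet> (S - matrix_inv K) = 0"
  shows "cmat (matrix_inv K) \<in> reciprocal (cspan L) \<inter> {Sig + cmat S | Sig. Sig \<in> perpC (cspan L)}"
proof
  have "cmat K ** cmat (matrix_inv K) = mat 1"
    by (simp add: cmat_mult[symmetric] matrix_inv_right[OF Kinv] cmat_mat_1)
  then have "cmat (matrix_inv K) \<in> {matrix_inv A | A. A \<in> cspan L \<and> invertible A}"
    using right_inverse_imp_invertible_matrix_inv cmat_in_cspan[OF KL] by force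
  then show "cmat (matrix_inv K) \<in> reciprocal (cspan L)"
    unfolding reciprocal_def zariski_closure_def by blast
next
  define R where "R = matrix_inv K - S"
  have "transpose R = R" using matrix_inv_symmetric[OF Kinv] sym KL Ss
    by (simp add: R_def transpose_def vec_eq_iff)
  moreover have "\<forall>y\<in>L. y \<bullet> R = 0" using orth by (simp add: R_def inner_diff_right)
  ultimately have "cmat R \<in> perpC (cspan L)"
    using trace_cspan_mult_cmat_eq_0[OF sym] cmat_in_symC_iff unfolding perpC_def by blast
  moreover have "cmat (matrix_inv K) = cmat R + cmat S" by (simp add: R_def cmat_def vec_eq_iff)
  ultimately show "cmat (matrix_inv K) \<in> {Sig + cmat S | Sig. Sig \<in> perpC (cspan L)}" by blast
qed

definition pos_semidef :: "real^'n^'n \<Rightarrow> bool" where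
  "pos_semidef Q \<longleftrightarrow> transpose Q = Q \<and> (\<forall>x. 0 \<le> x \<bullet> (Q *v x))"

lemma symmetric_inner_matrix_vector_commute:
  fixes Q :: "real^'n^'n"
  assumes "transpose Q = Q"
  shows "u \<bullet> (Q *v v) = v \<bullet> (Q *v u)"
proof -
  have "u \<bullet> (Q *v v) = (u v* Q) \<bullet> v" by (simp add: dot_lmul_matrix)
  also have "u v* Q = Q *v u" using vector_transpose_matrix[of u Q] assms by simp
  finally show ?thesis by (simp add: inner_commute)
qed

lemma quadratic_form_add:
  fixes Q :: "real^'n^'n"
  assumes "transpose Q = Q"
  shows "(u + v) \<bullet> (Q *v (u + v)) = u \<bullet> (Q *v u) + 2 * (u \<bullet> (Q *v v)) + v \<bullet> (Q *v v)"
  using symmetric_inner_matrix_vector_commute[OF assms, of v u]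
  by (simp add: matrix_vector_right_distrib inner_add_left inner_add_right)

lemma axis_inner_matrix_vector: "axis a 1 \<bullet> (Q *v x) = Q$a \<bullet> (x::real^'n)"
  by (simp add: inner_axis' matrix_vector_mul_component)

lemma pos_semidef_symmetric_entry:
  assumes "pos_semidef Q"
  shows "Q$i$j = Q$j$i"
proof -
  have "transpose Q $ j $ i = Q $ j $ i" using assms by (simp add: pos_semidef_def)
  then show ?thesis by (simp add: transpose_def)
qed

lemma pos_semidef_diag_nonneg:
  assumes "pos_semidef Q"
  shows "0 \<le> Q$a$a"
proof -
  have "0 \<le> axis a 1 \<bullet> (Q *v axis a 1)" using assms by (simp add: pos_semidef_def)
  then show ?thesis by (simp add: axis_inner_matrix_vector inner_axis)
qed

lemma pos_semidef_diag_eq_0_imp_row_eq_0: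
  assumes Q: "pos_semidef Q" and "Q$a$a = 0"
  shows "Q$a$j = 0"
proof (rule ccontr)
  assume nz: "Q$a$j \<noteq> 0"
  have Qs: "transpose Q = Q" using Q by (simp add: pos_semidef_def)
  define t where "t = - (Q$j$j + 1) / (2 * Q$a$j)"
  have "0 \<le> (t *\<^sub>R axis a 1 + axis j 1) \<bullet> (Q *v (t *\<^sub>R axis a 1 + axis j 1))"
    using Q by (simp add: pos_semidef_def)
  also have "\<dots> = t * t * Q$a$a + 2 * (t * Q$a$j) + Q$j$j"
    by (simp add: quadratic_form_add[OF Qs] matrix_vector_mult_scaleR axis_inner_matrix_vector
        inner_axis)
  also have "\<dots> = -1" using \<open>Q$a$a = 0\<close> nz by (simp add: t_def field_simps)
  finally show False by simp
qed

lemma pos_semidef_schur_complement: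
  fixes Q :: "real^'n^'n"
  assumes Q: "pos_semidef Q" and pos: "Q$a$a > 0"
  shows "pos_semidef (\<chi> i j. Q$i$j - Q$a$i * Q$a$j / Q$a$a)"
    (is "pos_semidef ?Q'")
proof -
  have Qs: "transpose Q = Q" using Q by (simp add: pos_semidef_def)
  have "transpose ?Q' = ?Q'"
    using pos_semidef_symmetric_entry[OF Q] by (simp add: vec_eq_iff transpose_def mult.commute)
  moreover have "0 \<le> x \<bullet> (?Q' *v x)" for x
  proof -
    define s where "s = Q$a \<bullet> x"
    define c where "c = s / Q$a$a"
    have "?Q' *v x = Q *v x - (s / Q$a$a) *\<^sub>R Q$a"
      by (simp add: s_def vec_eq_iff matrix_vector_mult_def inner_vec_def sum_subtractf
          sum_distrib_left sum_divide_distrib algebra_simps)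
    then have Q'x: "x \<bullet> (?Q' *v x) = x \<bullet> (Q *v x) - s * s / Q$a$a"
      by (simp add: inner_diff_right inner_commute s_def)
    have "0 \<le> (x + (-c) *\<^sub>R axis a 1) \<bullet> (Q *v (x + (-c) *\<^sub>R axis a 1))"
      using Q by (simp add: pos_semidef_def)
    also have "\<dots> = x \<bullet> (Q *v x) + 2 * (- c * s) + c * c * Q$a$a"
      using symmetric_inner_matrix_vector_commute[OF Qs, of x "axis a 1"]
      unfolding quadratic_form_add[OF Qs] matrix_vector_mult_scaleR inner_scaleR_left
        inner_scaleR_right
      by (simp add: axis_inner_matrix_vector inner_axis s_def)
    also have "\<dots> = x \<bullet> (Q *v x) - s * s / Q$a$a" using pos by (simp add: c_def field_simps)
    finally show ?thesis by (simp add: Q'x)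
  qed
  ultimately show ?thesis by (simp add: pos_semidef_def)
qed

lemma pos_semidef_schur_complement_support:
  fixes Q :: "real^'n^'n"
  assumes Q: "pos_semidef Q" and supp: "\<forall>i j. i \<notin> insert a I \<longrightarrow> Q$i$j = 0"
    and pos: "Q$a$a > 0" and i: "i \<notin> I"
  shows "Q$i$j - Q$a$i * Q$a$j / Q$a$a = 0"
proof (cases "i = a")
  case True
  then show ?thesis using pos by simp
next
  case False
  then have "Q$i$j = 0" "Q$a$i = 0"
    using i supp pos_semidef_symmetric_entry[OF Q, of a i] by auto
  then show ?thesis by simp
qed

text \<open>Unpivoted Cholesky: each induction step splits off one Schur complement.\<close>
lemma pos_semidef_gram_decomposition:
  fixes Q :: "real^'n^'n"
  assumes "finite I" "pos_semidef Q" "\<forall>i j. i \<notin> I \<longrightarrow> Q$i$j = 0"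
  shows "\<exists>w. \<forall>i j. Q$i$j = (\<Sum>a\<in>I. w a $ i * w a $ j)"
  using assms
proof (induction I arbitrary: Q rule: finite_induct)
  case empty
  then show ?case by simp
next
  case (insert a I)
  show ?case
  proof (cases "Q$a$a = 0")
    case True
    then have row_a: "Q$a$j = 0" for j
      using pos_semidef_diag_eq_0_imp_row_eq_0 insert.prems(1) by blast
    have "\<forall>i j. i \<notin> I \<longrightarrow> Q$i$j = 0"
    proof (intro allI impI)
      fix i j assume "i \<notin> I"
      then show "Q$i$j = 0" by (cases "i = a") (use insert.prems(2) row_a in auto)
    qed
    then obtain w :: "'n \<Rightarrow> real^'n" where w: "\<forall>i j. Q$i$j = (\<Sum>b\<in>I. w b $ i * w b $ j)"
      using insert.IH insert.prems(1) by blast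
    show ?thesis
      by (rule exI[of _ "w(a := 0)"]) (use insert.hyps w in \<open>auto simp: row_a intro!: sum.cong\<close>)
  next
    case False
    then have pos: "Q$a$a > 0" using pos_semidef_diag_nonneg[OF insert.prems(1), of a] by simp
    define Q' where "Q' = (\<chi> i j. Q$i$j - Q$a$i * Q$a$j / Q$a$a)"
    have "\<forall>i j. i \<notin> I \<longrightarrow> Q'$i$j = 0"
      using pos_semidef_schur_complement_support[OF insert.prems pos] by (simp add: Q'_def)
    then obtain w where w: "\<forall>i j. Q'$i$j = (\<Sum>b\<in>I. w b $ i * w b $ j)"
      using insert.IH pos_semidef_schur_complement[OF insert.prems(1) pos] Q'_def by blast
    define w' where "w' = w(a := (1 / sqrt (Q$a$a)) *\<^sub>R Q$a)"
    have "Q$i$j = (\<Sum>b\<in>insert a I. w' b $ i * w' b $ j)" for i j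
    proof -
      have "(\<Sum>b\<in>insert a I. w' b $ i * w' b $ j) = w' a $ i * w' a $ j + Q'$i$j"
        using insert.hyps w by (auto simp: w'_def intro!: sum.cong)
      also have "w' a $ i * w' a $ j = Q$a$i * Q$a$j / Q$a$a"
        using pos by (simp add: w'_def field_simps real_sqrt_mult[symmetric])
      finally show ?thesis by (simp add: Q'_def)
    qed
    then show ?thesis by blast
  qed
qed

lemma pos_def_imp_pos_semidef:
  assumes "pos_def P"
  shows "pos_semidef P"
proof -
  have "0 \<le> x \<bullet> (P *v x)" for x
    using assms by (cases "x = 0") (auto simp: pos_def_def intro: less_imp_le)
  then show ?thesis using assms by (simp add: pos_def_def pos_semidef_def)
qed

lemma pos_def_invertible:
  fixes K :: "real^'n^'n"
  assumes "pos_def K"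
  shows "invertible K"
proof -
  have "\<forall>x. K *v x = 0 \<longrightarrow> x = 0"
    using assms unfolding pos_def_def by (metis inner_zero_right less_irrefl)
  then show ?thesis using matrix_left_invertible_ker invertible_left_inverse by blast
qed

lemma pos_def_matrix_inv:
  fixes K :: "real^'n^'n"
  assumes "pos_def K"
  shows "pos_def (matrix_inv K)"
  unfolding pos_def_def
proof (intro conjI allI impI)
  have inv: "invertible K" using pos_def_invertible[OF assms] .
  show "transpose (matrix_inv K) = matrix_inv K"
    using matrix_inv_symmetric[OF inv] assms by (simp add: pos_def_def)
  fix x :: "real^'n" assume x: "x \<noteq> 0"
  define y where "y = matrix_inv K *v x"
  have Ky: "K *v y = x" using matrix_inv_right[OF inv] by (simp add: y_def matrix_vector_mul_assoc)
  then have "y \<noteq> 0" using x by auto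
  then have "y \<bullet> (K *v y) > 0" using assms by (simp add: pos_def_def)
  then show "x \<bullet> (matrix_inv K *v x) > 0" using Ky by (simp add: y_def inner_commute)
qed

lemma inner_eq_trace_transpose_mult: "(A::real^'n^'n) \<bullet> B = trace (transpose A ** B)"
  by (simp add: inner_vec_def trace_def matrix_matrix_mult_def transpose_def) (rule sum.swap)

lemma trace_mult_gram:
  fixes P Q :: "real^'n^'n"
  assumes "\<forall>i j. Q$i$j = (\<Sum>a\<in>UNIV. w a $ i * w a $ j)"
  shows "trace (P ** Q) = (\<Sum>a\<in>UNIV. w a \<bullet> (P *v w a))"
proof -
  have "trace (P ** Q) = (\<Sum>i\<in>UNIV. \<Sum>j\<in>UNIV. \<Sum>a\<in>UNIV. w a $ i * P$i$j * w a $ j)"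
    by (simp add: trace_def matrix_matrix_mult_def assms sum_distrib_left mult.commute
        mult.left_commute)
  also have "\<dots> = (\<Sum>i\<in>UNIV. \<Sum>a\<in>UNIV. \<Sum>j\<in>UNIV. w a $ i * P$i$j * w a $ j)"
    by (rule sum.cong[OF refl], rule sum.swap)
  also have "\<dots> = (\<Sum>a\<in>UNIV. \<Sum>i\<in>UNIV. \<Sum>j\<in>UNIV. w a $ i * P$i$j * w a $ j)"
    by (rule sum.swap)
  also have "\<dots> = (\<Sum>a\<in>UNIV. w a \<bullet> (P *v w a))"
    by (simp add: inner_vec_def matrix_vector_mult_def sum_distrib_left mult.assoc)
  finally show ?thesis .
qed

text \<open>Writing h P h as a sum of rank-one matrices w w^T, the inner product becomes
  tr (P h P h) = \<Sum> w^T P w.\<close>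
lemma pos_def_sandwich_inner_eq_0:
  fixes P h :: "real^'n^'n"
  assumes P: "pos_def P" and hs: "transpose h = h" and z: "h \<bullet> (P ** h ** P) = 0"
  shows "h = 0"
proof -
  have Ps: "transpose P = P" and Ppd: "\<And>x. x \<noteq> 0 \<Longrightarrow> x \<bullet> (P *v x) > 0"
    using P by (auto simp: pos_def_def)
  have Pnn: "x \<bullet> (P *v x) \<ge> 0" for x
    using pos_def_imp_pos_semidef[OF P] by (simp add: pos_semidef_def)
  define Q where "Q = h ** P ** h"
  have Qx: "x \<bullet> (Q *v x) = (h *v x) \<bullet> (P *v (h *v x))" for x
  proof -
    have "Q *v x = h *v (P *v (h *v x))" by (simp add: Q_def matrix_vector_mul_assoc matrix_mul_assoc)
    then show ?thesis
      using symmetric_inner_matrix_vector_commute[OF hs, of x "P *v (h *v x)"]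
      by (simp add: inner_commute)
  qed
  have "pos_semidef Q"
    using Ps hs Qx Pnn by (simp add: pos_semidef_def Q_def matrix_transpose_mul matrix_mul_assoc)
  then obtain w :: "'n \<Rightarrow> real^'n" where w: "\<forall>i j. Q$i$j = (\<Sum>a\<in>UNIV. w a $ i * w a $ j)"
    using pos_semidef_gram_decomposition[of UNIV Q] by auto
  have "h \<bullet> (P ** h ** P) = trace (Q ** P)"
    using hs by (simp add: inner_eq_trace_transpose_mult Q_def matrix_mul_assoc)
  also have "\<dots> = trace (P ** Q)" by (rule trace_mul_sym)
  also have "\<dots> = (\<Sum>a\<in>UNIV. w a \<bullet> (P *v w a))" using w by (rule trace_mult_gram)
  finally have "(\<Sum>a\<in>UNIV. w a \<bullet> (P *v w a)) = 0" using z by simp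
  then have "w a \<bullet> (P *v w a) = 0" for a
    using sum_nonneg_eq_0_iff[of UNIV "\<lambda>a. w a \<bullet> (P *v w a)"] Pnn by simp
  then have "w a = 0" for a using Ppd[of "w a"] by (cases "w a = 0") auto
  then have "Q = 0" using w by (simp add: vec_eq_iff)
  then have "(h *v x) \<bullet> (P *v (h *v x)) = 0" for x using Qx[of x] by simp
  then have "h *v x = 0" for x using Ppd[of "h *v x"] by (cases "h *v x = 0") auto
  then show ?thesis by (simp add: matrix_eq)
qed

locale orthogonal_projection =
  fixes L :: "'a::euclidean_space set" and pr :: "'a \<Rightarrow> 'a"
  assumes subspace: "subspace L"
    and linear: "linear pr"
    and range: "pr x \<in> L"
    and orthogonal: "y \<in> L \<Longrightarrow> y \<bullet> (x - pr x) = 0"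
begin

lemma bounded_linear: "bounded_linear pr"
  using linear linear_conv_bounded_linear by blast

lemma fixes_subspace: "x \<in> L \<Longrightarrow> pr x = x"
  using orthogonal[of "x - pr x" x] subspace range subspace_diff by fastforce

lemma idem: "pr (pr x) = pr x"
  using fixes_subspace range by blast

lemma eq_0_imp_orthogonal: "pr x = 0 \<Longrightarrow> y \<in> L \<Longrightarrow> y \<bullet> x = 0"
  using orthogonal[of y x] by simp

end

lemma orthogonal_projection_exists:
  fixes L :: "'a::euclidean_space set"
  assumes "subspace L"
  obtains pr where "orthogonal_projection L pr"
proof -
  obtain B where "B \<subseteq> L"
    and ortho: "pairwise orthogonal B" "\<And>x. x \<in> B \<Longrightarrow> norm x = 1"
    and "independent B" "card B = dim L" "span B = L"
    using orthonormal_basis_subspace [OF assms] by metis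
  then have fB: "finite B"
    by (simp add: indep_card_eq_dim_span)
  have *: "\<forall>x\<in>B. \<forall>y\<in>B. x \<bullet> y = (if x=y then 1 else 0)"
    using ortho norm_eq_1 by (auto simp: orthogonal_def pairwise_def)
  define pr where "pr v = (\<Sum>b\<in>B. (v \<bullet> b) *\<^sub>R b)" for v
  have "linear pr"
    by (rule linearI) (simp_all add: pr_def inner_add_left scaleR_add_left sum.distrib
        scaleR_sum_right)
  moreover have "pr v \<in> L" for v
    unfolding pr_def
    by (metis (no_types, lifting) \<open>span B = L\<close> assms subspace_sum span_base span_mul)
  moreover have "y \<bullet> (v - pr v) = 0" if "y \<in> L" for y v
  proof -
    obtain u where u: "y = (\<Sum>b\<in>B. u b *\<^sub>R b)"
      using \<open>y \<in> L\<close> \<open>span B = L\<close> span_finite [OF fB] by auto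
    have "b \<bullet> (v - pr v) = 0" if "b \<in> B" for b
      using that fB unfolding pr_def
      by (simp add: * algebra_simps inner_sum_right if_distrib [of "(*)v" for v] inner_commute
          cong: if_cong)
    then show "y \<bullet> (v - pr v) = 0"
      by (simp add: u inner_sum_left)
  qed
  ultimately show thesis using that assms unfolding orthogonal_projection_def by blast
qed

lemma matrix_mult_bounded_bilinear:
  "bounded_bilinear (\<lambda>(A::real^'n^'n) (B::real^'n^'n). A ** B)"
proof -
  have "linear (\<lambda>B::real^'n^'n. A ** B)" "linear (\<lambda>B::real^'n^'n. B ** A)"
    for A :: "real^'n^'n"
    by (rule linearI; simp add: vec_eq_iff matrix_matrix_mult_def sum.distrib
        algebra_simps scaleR_sum_right sum_distrib_left)+
  then have "bilinear (\<lambda>(A::real^'n^'n) (B::real^'n^'n). A ** B)" by (simp add: bilinear_def)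
  then show ?thesis using bilinear_conv_bounded_bilinear by blast
qed

text \<open>The matrix inverse is encoded by the polynomial equation \<Sigma> A = 1, so that no derivative
  of the inverse is needed: the solutions of inverse_equation pr (A, \<Sigma>) = (1, pr S) are the
  invertible A \<in> L with \<Sigma> = A^-1 and pr \<Sigma> = pr S.\<close>
definition inverse_equation ::
    "(real^'n^'n \<Rightarrow> real^'n^'n) \<Rightarrow> (real^'n^'n) \<times> (real^'n^'n) \<Rightarrow> (real^'n^'n) \<times> (real^'n^'n)"
  where
  "inverse_equation pr x = (snd x ** pr (fst x), pr (snd x) + fst x - pr (fst x))"

lemma inverse_equation_has_derivative:
  fixes pr :: "real^'n^'n \<Rightarrow> real^'n^'n"
  assumes "bounded_linear pr"
  shows "(inverse_equation pr has_derivative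
      (\<lambda>h. (snd x ** pr (fst h) + snd h ** pr (fst x), pr (snd h) + fst h - pr (fst h)))) (at x)"
proof -
  have pr_fst: "bounded_linear (\<lambda>x::(real^'n^'n) \<times> (real^'n^'n). pr (fst x))"
    using bounded_linear_compose[OF assms bounded_linear_fst] by (simp add: o_def)
  have d1: "((\<lambda>x. snd x ** pr (fst x)) has_derivative
      (\<lambda>h. snd x ** pr (fst h) + snd h ** pr (fst x))) (at x)"
    using bounded_bilinear.FDERIV[OF matrix_mult_bounded_bilinear
        bounded_linear_imp_has_derivative[OF bounded_linear_snd]
        bounded_linear_imp_has_derivative[OF pr_fst]]
    by simp
  have "bounded_linear (\<lambda>x::(real^'n^'n) \<times> (real^'n^'n). pr (snd x) + fst x - pr (fst x))"
    using assms unfolding linear_conv_bounded_linear[symmetric]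
    by (intro linearI) (simp_all add: linear_add linear_scale algebra_simps)
  then have d2: "((\<lambda>x. pr (snd x) + fst x - pr (fst x)) has_derivative
      (\<lambda>h. pr (snd h) + fst h - pr (fst h))) (at x)"
    by (rule bounded_linear_imp_has_derivative)
  show ?thesis unfolding inverse_equation_def using has_derivative_Pair[OF d1 d2] by simp
qed

lemma inverse_equation_solution:
  fixes L :: "(real^'n^'n) set"
  assumes "orthogonal_projection L pr" and eq: "inverse_equation pr (A, \<Sigma>) = (mat 1, pr S)"
  shows "pr A \<in> L" "invertible (pr A)" "\<forall>y\<in>L. y \<bullet> (S - matrix_inv (pr A)) = 0"
proof -
  interpret orthogonal_projection L pr by fact
  have e1: "\<Sigma> ** pr A = mat 1" and e2: "pr S = pr \<Sigma> + A - pr A"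
    using eq by (simp_all add: inverse_equation_def)
  show "pr A \<in> L" by (rule range)
  have "pr A ** \<Sigma> = mat 1" using e1 matrix_left_right_inverse by blast
  then show "invertible (pr A)" using right_inverse_imp_invertible_matrix_inv by blast
  have inv: "matrix_inv (pr A) = \<Sigma>"
    using \<open>pr A ** \<Sigma> = mat 1\<close> right_inverse_imp_invertible_matrix_inv by blast
  have d: "A - pr A = pr (S - \<Sigma>)" using e2 linear by (simp add: linear_diff)
  then have "A - pr A \<in> L" using range by metis
  then have "(A - pr A) \<bullet> (A - pr A) = 0" by (rule orthogonal)
  then have "pr (S - \<Sigma>) = 0" using d by simp
  then show "\<forall>y\<in>L. y \<bullet> (S - matrix_inv (pr A)) = 0" using inv eq_0_imp_orthogonal by blast
qed

lemma inverse_equation_derivative_kernel: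
  fixes L :: "(real^'n^'n) set"
  assumes "orthogonal_projection L pr" and sym: "\<forall>K\<in>L. transpose K = K"
    and pd: "pos_def K0"
    and c1: "matrix_inv K0 ** pr a + \<sigma> ** K0 = 0" and c2: "pr \<sigma> + a - pr a = 0"
  shows "a = 0" and "\<sigma> = 0"
proof -
  interpret orthogonal_projection L pr by fact
  define P where "P = matrix_inv K0"
  have PK: "K0 ** P = mat 1"
    using matrix_inv_right[OF pos_def_invertible[OF pd]] by (simp add: P_def)
  have "pr \<sigma> = pr (pr \<sigma> + a - pr a)"
    using linear by (simp add: linear_add linear_diff idem)
  then have "pr \<sigma> = 0" using c2 linear_0[OF linear] by simp
  then have a: "pr a = a" using c2 by simp
  then have "a \<in> L" using range by metis
  have "\<sigma> ** K0 = - (P ** a)"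
    using c1 a by (simp add: P_def eq_neg_iff_add_eq_0 add.commute)
  then have "\<sigma> = - (P ** a) ** P" using PK by (metis matrix_mul_assoc matrix_mul_rid)
  then have s: "\<sigma> = - (P ** a ** P)"
    by (simp add: matrix_matrix_mult_def vec_eq_iff sum_negf)
  have "a \<bullet> \<sigma> = 0" using eq_0_imp_orthogonal[OF \<open>pr \<sigma> = 0\<close> \<open>a \<in> L\<close>] .
  then show "a = 0"
    using pos_def_sandwich_inner_eq_0[OF pos_def_matrix_inv[OF pd]] sym \<open>a \<in> L\<close> s
    by (simp add: P_def)
  then show "\<sigma> = 0" using s by simp
qed

lemma inverse_equation_open_at_pos_def:
  fixes L :: "(real^'n^'n) set" and K0 :: "real^'n^'n"
  assumes pr: "orthogonal_projection L pr" and sym: "\<forall>K\<in>L. transpose K = K"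
    and K0L: "K0 \<in> L" and pd: "pos_def K0"
  shows "(mat 1, pr (matrix_inv K0)) \<in> interior (range (inverse_equation pr))"
proof -
  interpret orthogonal_projection L pr by (fact pr)
  define x0 where "x0 = (K0, matrix_inv K0)"
  let ?\<Phi> = "inverse_equation pr"
  let ?D = "\<lambda>h. (snd x0 ** pr (fst h) + snd h ** pr (fst x0), pr (snd h) + fst h - pr (fst h))"
  have der: "(?\<Phi> has_derivative (\<lambda>h. (snd x ** pr (fst h) + snd h ** pr (fst x),
      pr (snd h) + fst h - pr (fst h)))) (at x)" for x
    by (rule inverse_equation_has_derivative[OF bounded_linear])
  then have cont: "continuous_on UNIV ?\<Phi>"
    by (intro continuous_at_imp_continuous_on ballI has_derivative_continuous)
  have prK0: "pr K0 = K0" using fixes_subspace K0L .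
  have linD: "linear ?D" using der[of x0] by (rule has_derivative_linear)
  have "inj ?D"
    unfolding linear_injective_0[OF linD]
  proof (intro allI impI)
    fix h :: "(real^'n^'n) \<times> (real^'n^'n)"
    assume "?D h = 0"
    then have "matrix_inv K0 ** pr (fst h) + snd h ** K0 = 0"
      and "pr (snd h) + fst h - pr (fst h) = 0"
      by (simp_all add: x0_def prK0 zero_prod_def)
    from inverse_equation_derivative_kernel[OF pr sym pd this] show "h = 0"
      by (simp add: prod_eq_iff)
  qed
  then have "surj ?D" using linear_injective_imp_surjective[OF linD] by simp
  then obtain g where "linear g" and Dg: "?D \<circ> g = id"
    using linear_surjective_right_inverse[OF linD] by blast
  then have "bounded_linear g" using linear_conv_bounded_linear by blast
  then have "?\<Phi> x0 \<in> interior (range ?\<Phi>)"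
    using sussmann_open_mapping[OF open_UNIV cont UNIV_I der[of x0] _ Dg subset_refl] by simp
  moreover have "?\<Phi> x0 = (mat 1, pr (matrix_inv K0))"
    using matrix_inv_left[OF pos_def_invertible[OF pd]] prK0
    by (simp add: inverse_equation_def x0_def)
  ultimately show ?thesis by simp
qed

lemma pos_def_imp_open_set_of_inverse_translates:
  fixes L :: "(real^'n^'n) set" and K0 :: "real^'n^'n"
  assumes "subspace L" and sym: "\<forall>K\<in>L. transpose K = K" and K0L: "K0 \<in> L"
    and pd: "pos_def K0"
  obtains U where "open U" "matrix_inv K0 \<in> U"
    "\<And>S. S \<in> U \<Longrightarrow> \<exists>K\<in>L. invertible K \<and> (\<forall>y\<in>L. y \<bullet> (S - matrix_inv K) = 0)"
proof -
  obtain pr where pr: "orthogonal_projection L pr"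
    using orthogonal_projection_exists[OF assms(1)] by blast
  interpret orthogonal_projection L pr by (fact pr)
  define U where "U = (\<lambda>S. (mat 1 :: real^'n^'n, pr S)) -` interior (range (inverse_equation pr))"
  have "continuous_on UNIV (\<lambda>S. (mat 1 :: real^'n^'n, pr S))"
    by (intro continuous_on_Pair continuous_on_const linear_continuous_on[OF bounded_linear])
  then have "open U" unfolding U_def by (intro open_vimage open_interior)
  moreover have "matrix_inv K0 \<in> U"
    using inverse_equation_open_at_pos_def[OF pr sym K0L pd] by (simp add: U_def)
  moreover have "\<exists>K\<in>L. invertible K \<and> (\<forall>y\<in>L. y \<bullet> (S - matrix_inv K) = 0)" if "S \<in> U" for S
  proof -
    have "(mat 1, pr S) \<in> range (inverse_equation pr)"
      using that interior_subset unfolding U_def by blast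
    then obtain A \<Sigma> where "inverse_equation pr (A, \<Sigma>) = (mat 1, pr S)"
      by (metis rangeE surj_pair)
    from inverse_equation_solution[OF pr this] show ?thesis by blast
  qed
  ultimately show thesis by (rule that)
qed

theorem corollary6p2:
  fixes L :: "(real^'n^'n) set"
  assumes "subspace L"
    and "\<forall>K\<in>L. transpose K = K"
    and "regular L"
    and "has_ml_degree L 0"
  shows "\<not> (\<exists>K\<in>L. pos_def K)"
proof
  assume "\<exists>K\<in>L. pos_def K"
  then obtain K0 where K0: "K0 \<in> L" "pos_def K0" by blast
  obtain U where U: "open U" "matrix_inv K0 \<in> U"
    and inverse_translate:
      "\<And>S. S \<in> U \<Longrightarrow> \<exists>K\<in>L. invertible K \<and> (\<forall>y\<in>L. y \<bullet> (S - matrix_inv K) = 0)"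
    using pos_def_imp_open_set_of_inverse_translates[OF assms(1,2) K0] by blast
  have "transpose (matrix_inv K0) = matrix_inv K0"
    using pos_def_matrix_inv[OF K0(2)] by (simp add: pos_def_def)
  then obtain S where S: "S \<in> U" "transpose S = S"
    and empty: "reciprocal (cspan L) \<inter> {Sig + cmat S | Sig. Sig \<in> perpC (cspan L)} = {}"
    by (rule ml_degree_0_fibre_empty_near[OF assms(4) U])
  obtain K where "K \<in> L" "invertible K" "\<forall>y\<in>L. y \<bullet> (S - matrix_inv K) = 0"
    using inverse_translate[OF S(1)] by blast
  from cmat_matrix_inv_in_reciprocal_inter_perp_translate[OF assms(2) this(1,2) S(2) this(3)]
  show False using empty by blast
qed

end
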